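(* Let $\ell\ge 3$ be an integer. There exist $M=M(\ell)\ge 1$ and $C=C(\ell)>0$ such that for every $m$ with $M\sqrt n\le m\le \frac{n}{16\lceil \ell/2\rceil}$ and every $n$-vertex graph $G$ with maximum degree $\Delta(G)<\frac{n}{32\lfloor \ell/2\rfloor}$ and minimum degree $\delta(G)\ge m$ the following holds: if $p\ge C\log n/n$, then asymptotically almost surely $G\cup G(n,p)$ contains at least $m$ pairwise vertex-disjoint copies of $C_\ell$.
   Context: $C_\ell$ is the cycle on $\ell$ vertices. $G(n,p)$ is the binomial random graph on $V(G)$ (each pair an edge independently with probability $p$), and $G\cup G(n,p)$ has as edge set the union of both edge sets. "Asymptotically almost surely" means with probability tending to $1$ as $n\to\infty$, for any sequences $m=m_n$, $G=G_n$ satisfying the hypotheses. *)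

theory Defs
  imports "HOL-Probability.Probability"
begin

definition all_pairs :: "nat \<Rightarrow> nat set set" where
  "all_pairs n = {e. \<exists>u v. e = {u, v} \<and> u \<noteq> v \<and> u < n \<and> v < n}"

definition is_graph_on :: "nat \<Rightarrow> nat set set \<Rightarrow> bool" where
  "is_graph_on n G \<longleftrightarrow> G \<subseteq> all_pairs n"

definition degree :: "nat set set \<Rightarrow> nat \<Rightarrow> nat" where
  "degree G u = card {v. {u, v} \<in> G}"

definition gnp :: "nat \<Rightarrow> real \<Rightarrow> nat set set pmf" where
  "gnp n p = map_pmf (\<lambda>f. {e \<in> all_pairs n. f e})
                     (Pi_pmf (all_pairs n) False (\<lambda>_. bernoulli_pmf p))"

definition is_cycle_in :: "nat set set \<Rightarrow> nat \<Rightarrow> nat list \<Rightarrow> bool" where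
  "is_cycle_in H l vs \<longleftrightarrow> length vs = l \<and> distinct vs \<and>
     (\<forall>i<l. {vs ! i, vs ! ((i + 1) mod l)} \<in> H)"

definition has_disjoint_cycles :: "nat set set \<Rightarrow> nat \<Rightarrow> nat \<Rightarrow> bool" where
  "has_disjoint_cycles H l k \<longleftrightarrow>
     (\<exists>cs :: nat \<Rightarrow> nat list. (\<forall>i<k. is_cycle_in H l (cs i)) \<and>
        (\<forall>i<k. \<forall>j<k. i \<noteq> j \<longrightarrow> set (cs i) \<inter> set (cs j) = {}))"

end

theory Submission
  imports Defs
begin

(* For W a set of vertices, call {v, z} a closing pair of W if G[W] has a path on l - 1 vertices
   starting at v whose last vertex is adjacent to some z in W off the path; a random edge on a
   closing pair then completes a copy of C_l inside W.  Repeatedly deleting a vertex of minimum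
   degree shows that W has at least e(G[W])/2 - l|W|/2 closing pairs, and the degree bounds turn
   this into at least nm/8 closing pairs whenever W misses at most lm vertices.  If the random
   graph meets the closing pairs of every such W, the m disjoint cycles can be picked greedily,
   each one avoiding the vertices already used.  A union bound over the at most (lm+1) n^(lm)
   sets of used vertices, each of which is avoided with probability at most
   (1-p)^(nm/8) <= n^(-(l+2)m) when p >= 8(l+2) ln n / n, shows that this fails with
   probability O(1/n). *)

definition neighbours :: "'a set set \<Rightarrow> 'a \<Rightarrow> 'a set" where
  "neighbours G v = {u. {v, u} \<in> G}"

lemma degree_eq_card_neighbours: "degree G u = card (neighbours G u)"
  by (simp add: degree_def neighbours_def)

lemma neighbours_sym: "u \<in> neighbours G v \<longleftrightarrow> v \<in> neighbours G u"
  by (auto simp: neighbours_def insert_commute)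

lemma is_graph_on_neighbours_subset:
  assumes "is_graph_on n G" shows "neighbours G u \<subseteq> {..<n}"
proof
  fix v assume "v \<in> neighbours G u"
  then have "{u, v} \<in> all_pairs n"
    using assms by (auto simp: neighbours_def is_graph_on_def)
  then obtain a b where "{u, v} = {a, b}" "a < n" "b < n"
    by (auto simp: all_pairs_def)
  then show "v \<in> {..<n}"
    by (auto simp: doubleton_eq_iff)
qed

lemma is_graph_on_loop_free:
  assumes "is_graph_on n G" shows "{v} \<notin> G"
proof
  assume "{v} \<in> G"
  then obtain a b where "{v} = {a, b}" "a \<noteq> b"
    using assms by (auto simp: is_graph_on_def all_pairs_def)
  then show False
    by auto
qed

definition closing_vertices :: "'a set set \<Rightarrow> nat \<Rightarrow> 'a set \<Rightarrow> 'a \<Rightarrow> 'a set" where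
  "closing_vertices G l W v = {z. \<exists>ys. length ys = l - 1 \<and> ys \<noteq> [] \<and> hd ys = v \<and> distinct ys \<and>
      set ys \<subseteq> W \<and> successively (\<lambda>x y. {x, y} \<in> G) ys \<and>
      z \<in> W - set ys \<and> {last ys, z} \<in> G}"

definition closing_pairs :: "'a set set \<Rightarrow> nat \<Rightarrow> 'a set \<Rightarrow> 'a set set" where
  "closing_pairs G l W = {{v, z} | v z. v \<in> W \<and> z \<in> closing_vertices G l W v}"

lemma closing_vertices_subset: "closing_vertices G l W v \<subseteq> W - {v}"
  unfolding closing_vertices_def by (auto dest: hd_in_set)

lemma finite_closing_vertices: "finite W \<Longrightarrow> finite (closing_vertices G l W v)"
  using closing_vertices_subset by (rule finite_subset) simp

lemma closing_vertices_mono: "W' \<subseteq> W \<Longrightarrow> closing_vertices G l W' v \<subseteq> closing_vertices G l W v"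
  unfolding closing_vertices_def by blast

section \<open>Cycles from closing pairs\<close>

lemma is_cycle_in_if_successively:
  assumes "successively (\<lambda>x y. {x, y} \<in> H) c" "distinct c" "{last c, hd c} \<in> H"
  shows "is_cycle_in H (length c) c"
  unfolding is_cycle_in_def
proof (intro conjI allI impI refl assms(2))
  fix i assume i: "i < length c"
  show "{c ! i, c ! ((i + 1) mod length c)} \<in> H"
  proof (cases "Suc i < length c")
    case True
    then show ?thesis using assms(1) by (simp add: successively_conv_nth)
  next
    case False
    then have "i = length c - 1" "Suc i = length c" "c \<noteq> []" using i by auto
    then have "c ! i = last c" "c ! ((i + 1) mod length c) = hd c"
      by (simp_all add: last_conv_nth hd_conv_nth)
    then show ?thesis using assms(3) by simp
  qed
qed

lemma cycle_from_closing_pair: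
  assumes "e \<in> R" "e \<in> closing_pairs G l W"
  shows "\<exists>c. is_cycle_in (G \<union> R) l c \<and> set c \<subseteq> W"
proof -
  obtain v z where e: "e = {v, z}" "z \<in> closing_vertices G l W v"
    using assms(2) unfolding closing_pairs_def by blast
  obtain ys where ys: "length ys = l - 1" "ys \<noteq> []" "hd ys = v" "distinct ys" "set ys \<subseteq> W"
      "successively (\<lambda>x y. {x, y} \<in> G) ys" "z \<in> W - set ys" "{last ys, z} \<in> G"
    using e(2) unfolding closing_vertices_def by blast
  have walk: "successively (\<lambda>x y. {x, y} \<in> G \<union> R) (ys @ [z])"
    using ys(2,6,8) by (auto simp: successively_append_iff elim: successively_mono)
  have "{last (ys @ [z]), hd (ys @ [z])} \<in> G \<union> R"
    using assms(1) e(1) ys(2,3) by (simp add: insert_commute)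
  moreover have "length (ys @ [z]) = l" using ys(1,2) by (cases ys) auto
  ultimately have "is_cycle_in (G \<union> R) l (ys @ [z])"
    using is_cycle_in_if_successively[OF walk] ys(4,7) by simp
  then show ?thesis using ys(5,7) by (intro exI[of _ "ys @ [z]"]) auto
qed

lemma has_disjoint_cycles_if_closing_pairs_hit:
  assumes hit: "\<And>U. U \<subseteq> V \<Longrightarrow> card U \<le> l * m \<Longrightarrow> R \<inter> closing_pairs G l (V - U) \<noteq> {}"
  shows "has_disjoint_cycles (G \<union> R) l m"
proof -
  have "\<exists>cs. (\<forall>i<k. is_cycle_in (G \<union> R) l (cs i) \<and> set (cs i) \<subseteq> V) \<and>
          (\<forall>i<k. \<forall>j<k. i \<noteq> j \<longrightarrow> set (cs i) \<inter> set (cs j) = {})" if "k \<le> m" for k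
    using that
  proof (induction k)
    case 0
    then show ?case by auto
  next
    case (Suc k)
    then obtain cs where cs: "\<forall>i<k. is_cycle_in (G \<union> R) l (cs i) \<and> set (cs i) \<subseteq> V"
        "\<forall>i<k. \<forall>j<k. i \<noteq> j \<longrightarrow> set (cs i) \<inter> set (cs j) = {}"
      by auto
    define U where "U = (\<Union>i<k. set (cs i))"
    have "card U \<le> (\<Sum>i<k. card (set (cs i)))"
      unfolding U_def by (rule card_UN_le) simp
    also have "\<dots> \<le> (\<Sum>i<k. l)"
      using cs(1) by (intro sum_mono) (auto simp: is_cycle_in_def distinct_card)
    also have "\<dots> \<le> l * m"
      using Suc.prems by simp
    finally have "card U \<le> l * m" .
    moreover have "U \<subseteq> V"
      using cs(1) U_def by auto
    ultimately obtain e where "e \<in> R" "e \<in> closing_pairs G l (V - U)"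
      using hit by blast
    then obtain c where c: "is_cycle_in (G \<union> R) l c" "set c \<subseteq> V - U"
      using cycle_from_closing_pair by blast
    have "\<forall>i<Suc k. is_cycle_in (G \<union> R) l ((cs(k := c)) i) \<and> set ((cs(k := c)) i) \<subseteq> V"
      using cs(1) c by (auto simp: less_Suc_eq)
    moreover have "\<forall>i<Suc k. \<forall>j<Suc k. i \<noteq> j \<longrightarrow> set ((cs(k := c)) i) \<inter> set ((cs(k := c)) j) = {}"
      using cs(2) c(2) U_def by (auto simp: less_Suc_eq)
    ultimately show ?case by blast
  qed
  from this[of m] show ?thesis
    unfolding has_disjoint_cycles_def by blast
qed

section \<open>Counting closing pairs\<close>

lemma path_from_vertex_of_min_degree:
  assumes "v \<in> W" "\<And>u. u \<in> W \<Longrightarrow> d \<le> card (neighbours G u \<inter> W)" "k < d"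
  shows "\<exists>ys. length ys = Suc k \<and> hd ys = v \<and> distinct ys \<and> set ys \<subseteq> W \<and>
           successively (\<lambda>x y. {x, y} \<in> G) ys"
  using \<open>k < d\<close>
proof (induction k)
  case 0
  then show ?case using assms(1) by (intro exI[of _ "[v]"]) auto
next
  case (Suc k)
  then obtain ys where ys: "length ys = Suc k" "hd ys = v" "distinct ys" "set ys \<subseteq> W"
      "successively (\<lambda>x y. {x, y} \<in> G) ys"
    by auto
  have "ys \<noteq> []" using ys(1) by auto
  then have "last ys \<in> W" using ys(4) by auto
  then have "card (set ys) < card (neighbours G (last ys) \<inter> W)"
    using assms(2)[of "last ys"] Suc.prems ys(1,3) by (simp add: distinct_card)
  then have "\<not> neighbours G (last ys) \<inter> W \<subseteq> set ys"
    using card_mono[OF List.finite_set] by (meson leD)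
  then obtain z where z: "z \<in> neighbours G (last ys)" "z \<in> W" "z \<notin> set ys"
    by blast
  show ?case
    using ys z \<open>ys \<noteq> []\<close>
    by (intro exI[of _ "ys @ [z]"]) (auto simp: successively_append_iff neighbours_def)
qed

lemma min_degree_le_card_closing_vertices:
  assumes "finite W" "v \<in> W" "\<And>u. u \<in> W \<Longrightarrow> d \<le> card (neighbours G u \<inter> W)" "l \<ge> 2"
  shows "d \<le> card (closing_vertices G l W v) + l"
proof (cases "d \<le> l")
  case False
  have "Suc (l - 2) = l - 1" "l - 2 < d"
    using assms(4) False by auto
  then obtain ys where ys: "length ys = l - 1" "hd ys = v" "distinct ys" "set ys \<subseteq> W"
      "successively (\<lambda>x y. {x, y} \<in> G) ys"
    using path_from_vertex_of_min_degree[OF assms(2,3), of "l - 2"] by auto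
  have "ys \<noteq> []" using ys(1) assms(4) by auto
  then have "neighbours G (last ys) \<inter> W - set ys \<subseteq> closing_vertices G l W v"
    unfolding closing_vertices_def using ys by (auto simp: neighbours_def)
  then have "card (neighbours G (last ys) \<inter> W - set ys) \<le> card (closing_vertices G l W v)"
    using assms(1) by (intro card_mono finite_closing_vertices)
  moreover have "card (neighbours G (last ys) \<inter> W) - card (set ys) \<le> card (neighbours G (last ys) \<inter> W - set ys)"
    by (rule diff_card_le_card_Diff) simp
  moreover have "d \<le> card (neighbours G (last ys) \<inter> W)"
    using assms(3) ys(4) \<open>ys \<noteq> []\<close> by (simp add: subset_iff)
  moreover have "card (set ys) = l - 1"
    using ys(1,3) by (simp add: distinct_card)
  ultimately show ?thesis by linarith
qed simp

lemma sum_card_neighbours_remove: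
  assumes "finite W" "v \<in> W" "{v} \<notin> G"
  shows "(\<Sum>u\<in>W. card (neighbours G u \<inter> W)) =
         2 * card (neighbours G v \<inter> W) + (\<Sum>u\<in>W - {v}. card (neighbours G u \<inter> (W - {v})))"
proof -
  have "v \<notin> neighbours G v" using assms(3) by (simp add: neighbours_def)
  then have v_nbs: "(W - {v}) \<inter> neighbours G v = neighbours G v \<inter> W" by blast
  have "card (neighbours G u \<inter> W) = card (neighbours G u \<inter> (W - {v})) + of_bool (u \<in> neighbours G v)"
    if "u \<in> W - {v}" for u
  proof (cases "u \<in> neighbours G v")
    case True
    then have "neighbours G u \<inter> W = insert v (neighbours G u \<inter> (W - {v}))"
      using assms(2) neighbours_sym[of v G u] by blast
    then show ?thesis using True assms(1) by simp
  next
    case False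
    then have "neighbours G u \<inter> W = neighbours G u \<inter> (W - {v})"
      using neighbours_sym[of v G u] by blast
    then show ?thesis using False by simp
  qed
  then have "(\<Sum>u\<in>W - {v}. card (neighbours G u \<inter> W)) =
      (\<Sum>u\<in>W - {v}. card (neighbours G u \<inter> (W - {v}))) + card ((W - {v}) \<inter> neighbours G v)"
    using assms(1) by (simp add: sum.distrib sum.If_cases of_bool_def)
  then show ?thesis
    using assms(1,2) v_nbs by (simp add: sum.remove)
qed

lemma sum_card_neighbours_le_closing_vertices:
  assumes "finite W" "\<forall>v. {v} \<notin> G" "l \<ge> 2"
  shows "(\<Sum>u\<in>W. card (neighbours G u \<inter> W)) \<le> 2 * (\<Sum>u\<in>W. card (closing_vertices G l W u) + l)"
  using assms(1)
proof (induction "card W" arbitrary: W rule: less_induct)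
  case less
  show ?case
  proof (cases "W = {}")
    case False
    obtain v where v: "v \<in> W" "\<And>u. u \<in> W \<Longrightarrow> card (neighbours G v \<inter> W) \<le> card (neighbours G u \<inter> W)"
      using ex_min_if_finite[of "(\<lambda>u. card (neighbours G u \<inter> W)) ` W"] less.prems False
      by (auto simp: not_less)
    have "(\<Sum>u\<in>W - {v}. card (neighbours G u \<inter> (W - {v})))
        \<le> 2 * (\<Sum>u\<in>W - {v}. card (closing_vertices G l (W - {v}) u) + l)"
      using less.hyps[of "W - {v}"] less.prems card_Diff1_less[OF less.prems v(1)] by simp
    also have "\<dots> \<le> 2 * (\<Sum>u\<in>W - {v}. card (closing_vertices G l W u) + l)"
      using less.prems
      by (intro mult_left_mono sum_mono add_right_mono card_mono finite_closing_vertices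
          closing_vertices_mono) auto
    finally have rest: "(\<Sum>u\<in>W - {v}. card (neighbours G u \<inter> (W - {v})))
        \<le> 2 * (\<Sum>u\<in>W - {v}. card (closing_vertices G l W u) + l)" .
    have "card (neighbours G v \<inter> W) \<le> card (closing_vertices G l W v) + l"
      using less.prems v assms(3) by (rule min_degree_le_card_closing_vertices)
    then have "(\<Sum>u\<in>W. card (neighbours G u \<inter> W)) \<le>
        2 * (card (closing_vertices G l W v) + l) + 2 * (\<Sum>u\<in>W - {v}. card (closing_vertices G l W u) + l)"
      using sum_card_neighbours_remove[OF less.prems v(1)] assms(2) rest by simp
    also have "\<dots> = 2 * (\<Sum>u\<in>W. card (closing_vertices G l W u) + l)"
      using less.prems v(1) by (simp add: sum.remove)
    finally show ?thesis .
  qed simp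
qed

lemma sum_card_closing_vertices_le:
  assumes "finite W"
  shows "(\<Sum>v\<in>W. card (closing_vertices G l W v)) \<le> 2 * card (closing_pairs G l W)"
proof -
  let ?S = "SIGMA v:W. closing_vertices G l W v"
  let ?P = "closing_pairs G l W"
  let ?fibre = "\<lambda>e. {(x, y). {x, y} = e}"
  have "finite ?S"
    by (intro finite_SigmaI assms finite_closing_vertices)
  moreover have "?P = (\<lambda>(v, z). {v, z}) ` ?S"
    unfolding closing_pairs_def by auto
  ultimately have "finite ?P" by simp
  have fibre: "?fibre {v, z} = {(v, z), (z, v)}" for v z
    by (auto simp: doubleton_eq_iff)
  have fibre_P: "finite (?fibre e)" "card (?fibre e) \<le> 2" if e: "e \<in> ?P" for e
  proof -
    obtain v z where "e = {v, z}"
      using e unfolding closing_pairs_def by blast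
    then have "?fibre e = {(v, z), (z, v)}"
      using fibre by (simp only:)
    then show "finite (?fibre e)" "card (?fibre e) \<le> 2"
      by (simp_all add: card_insert_le_m1)
  qed
  have "finite (\<Union>e\<in>?P. ?fibre e)"
    using \<open>finite ?P\<close> fibre_P(1) by (rule finite_UN_I)
  moreover have "?S \<subseteq> (\<Union>e\<in>?P. ?fibre e)"
  proof (rule subsetI, clarify)
    fix v z assume "v \<in> W" "z \<in> closing_vertices G l W v"
    then have "{v, z} \<in> ?P" unfolding closing_pairs_def by blast
    then show "(v, z) \<in> (\<Union>e\<in>?P. ?fibre e)" by blast
  qed
  ultimately have "card ?S \<le> card (\<Union>e\<in>?P. ?fibre e)"
    by (rule card_mono)
  also have "\<dots> \<le> (\<Sum>e\<in>?P. card (?fibre e))"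
    by (rule card_UN_le[OF \<open>finite ?P\<close>])
  also have "\<dots> \<le> (\<Sum>e\<in>?P. 2)"
    using fibre_P(2) by (rule sum_mono)
  finally show ?thesis
    using assms by (simp add: card_SigmaI finite_closing_vertices)
qed

lemma sum_card_neighbours_Int_commute:
  assumes "finite A" "finite B"
  shows "(\<Sum>v\<in>A. card (neighbours G v \<inter> B)) = (\<Sum>u\<in>B. card (neighbours G u \<inter> A))"
proof -
  have "(\<Sum>v\<in>A. card (neighbours G v \<inter> B)) = (\<Sum>v\<in>A. \<Sum>u\<in>B. of_bool (u \<in> neighbours G v))"
    using assms by (simp add: Int_commute Int_def)
  also have "\<dots> = (\<Sum>u\<in>B. \<Sum>v\<in>A. of_bool (v \<in> neighbours G u))"
    by (subst sum.swap) (simp add: neighbours_sym)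
  also have "\<dots> = (\<Sum>u\<in>B. card (neighbours G u \<inter> A))"
    using assms by (simp add: Int_commute Int_def)
  finally show ?thesis .
qed

lemma card_mult_le_card_closing_pairs:
  assumes "finite V" "U \<subseteq> V" "\<forall>v. {v} \<notin> G" "l \<ge> 2"
    and nbs: "\<And>u. neighbours G u \<subseteq> V"
    and deg: "\<And>u. u \<in> V \<Longrightarrow> m \<le> card (neighbours G u)"
  shows "card (V - U) * m \<le> 4 * card (closing_pairs G l (V - U)) + 2 * l * card (V - U) +
           (\<Sum>u\<in>U. card (neighbours G u))"
proof -
  define W where "W = V - U"
  have fin: "finite W" "finite U" "finite (neighbours G u)" for u
    using assms(1,2) nbs[of u] finite_subset unfolding W_def by auto
  have "card (neighbours G v) = card (neighbours G v \<inter> W) + card (neighbours G v \<inter> U)" for v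
  proof -
    have "neighbours G v = (neighbours G v \<inter> W) \<union> (neighbours G v \<inter> U)"
      using nbs[of v] unfolding W_def by blast
    then show ?thesis
      using fin(3) by (metis card_Un_disjoint finite_Int Diff_disjoint Int_Diff_disjoint W_def
          inf_commute inf_left_commute Int_empty_right)
  qed
  then have "card W * m \<le> (\<Sum>v\<in>W. card (neighbours G v \<inter> W)) + (\<Sum>v\<in>W. card (neighbours G v \<inter> U))"
    using deg sum_bounded_below[of W m "\<lambda>v. card (neighbours G v)"]
    by (simp add: W_def sum.distrib)
  moreover have "(\<Sum>v\<in>W. card (neighbours G v \<inter> U)) \<le> (\<Sum>u\<in>U. card (neighbours G u))"
    unfolding sum_card_neighbours_Int_commute[OF fin(1,2)]
    using fin(3) by (intro sum_mono card_mono) auto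
  moreover have "(\<Sum>v\<in>W. card (neighbours G v \<inter> W)) \<le> 2 * (\<Sum>v\<in>W. card (closing_vertices G l W v)) + 2 * l * card W"
    using sum_card_neighbours_le_closing_vertices[OF fin(1) assms(3,4)] by (simp add: sum.distrib mult_ac)
  moreover have "(\<Sum>v\<in>W. card (closing_vertices G l W v)) \<le> 2 * card (closing_pairs G l W)"
    by (rule sum_card_closing_vertices_le[OF fin(1)])
  ultimately show ?thesis
    unfolding W_def by linarith
qed

lemma sum_degree_le_of_max_degree:
  assumes "l \<ge> 3" "\<forall>u<n. real (degree G u) < real n / (32 * real (l div 2))"
    and "U \<subseteq> {..<n}" "card U \<le> l * m"
  shows "(\<Sum>u\<in>U. real (degree G u)) \<le> 3 / 32 * (real n * real m)"
proof -
  define a where "a = real (l div 2)"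
  have "a \<ge> 1" "real l \<le> 3 * a"
    unfolding a_def using assms(1) by linarith+
  have "(\<Sum>u\<in>U. real (degree G u)) \<le> (\<Sum>u\<in>U. real n / (32 * a))"
    unfolding a_def using assms(2,3) by (intro sum_mono) (auto intro: less_imp_le)
  also have "\<dots> = real (card U) * (real n / (32 * a))"
    by simp
  also have "\<dots> \<le> real l * real m * (real n / (32 * a))"
    using assms(4) \<open>a \<ge> 1\<close> by (intro mult_right_mono) (simp_all flip: of_nat_mult)
  also have "\<dots> \<le> 3 * a * real m * (real n / (32 * a))"
    using \<open>real l \<le> 3 * a\<close> \<open>a \<ge> 1\<close> by (intro mult_right_mono) auto
  also have "\<dots> = 3 / 32 * (real n * real m)"
    using \<open>a \<ge> 1\<close> by (simp add: field_simps)
  finally show ?thesis .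
qed

lemma card_closing_pairs_ge:
  assumes graph: "is_graph_on n G" and "l \<ge> 3"
    and max_deg: "\<forall>u<n. real (degree G u) < real n / (32 * real (l div 2))"
    and min_deg: "\<forall>u<n. degree G u \<ge> m"
    and m_le: "real m \<le> real n / (16 * real ((l + 1) div 2))"
    and m_ge: "64 * l \<le> 9 * m"
    and U: "U \<subseteq> {..<n}" "card U \<le> l * m"
  shows "real n * real m \<le> 8 * real (card (closing_pairs G l ({..<n} - U)))"
proof -
  define W where "W = {..<n} - U"
  define b where "b = real ((l + 1) div 2)"
  have "b \<ge> 1" "real l \<le> 2 * b"
    unfolding b_def using \<open>l \<ge> 3\<close> by linarith+
  have count: "card W * m \<le> 4 * card (closing_pairs G l W) + 2 * l * card W + (\<Sum>u\<in>U. degree G u)"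
    unfolding W_def degree_eq_card_neighbours using \<open>l \<ge> 3\<close> min_deg U(1)
    by (intro card_mult_le_card_closing_pairs is_graph_on_neighbours_subset[OF graph] allI
        is_graph_on_loop_free[OF graph]) (auto simp: degree_eq_card_neighbours)
  have "16 * b * real m \<le> real n"
    using m_le \<open>b \<ge> 1\<close> unfolding b_def[symmetric] by (simp add: field_simps)
  moreover have "real l * real m \<le> 2 * b * real m"
    using \<open>real l \<le> 2 * b\<close> by (intro mult_right_mono) auto
  ultimately have "real l * real m \<le> real n / 8" by linarith
  have deg_U: "(\<Sum>u\<in>U. real (degree G u)) \<le> 3 / 32 * (real n * real m)"
    using \<open>l \<ge> 3\<close> max_deg U by (rule sum_degree_le_of_max_degree)
  have "card U \<le> n"
    using card_mono[OF _ U(1)] by simp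
  then have "real (card W) = real n - real (card U)"
    using U(1) by (simp add: W_def card_Diff_subset finite_subset of_nat_diff)
  then have "7 / 8 * real n \<le> real (card W)" "real (card W) \<le> real n"
    using U(2) \<open>real l * real m \<le> real n / 8\<close> by (simp_all flip: of_nat_mult)
  then have "7 / 8 * real n * real m \<le> real (card W) * real m"
    "2 * real l * real (card W) \<le> 2 * real l * real n"
    by (intro mult_right_mono mult_left_mono; simp)+
  moreover have "64 * real l * real n \<le> 9 * real m * real n"
    using of_nat_le_iff[THEN iffD2, OF m_ge] by (intro mult_right_mono) simp_all
  ultimately have "7 / 8 * (real n * real m) \<le> real (card W) * real m"
    "2 * real l * real (card W) \<le> 9 / 32 * (real n * real m)"
    by (simp_all add: algebra_simps)
  moreover have "real (card W) * real m \<le> 4 * real (card (closing_pairs G l W)) +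
      2 * real l * real (card W) + (\<Sum>u\<in>U. real (degree G u))"
    using of_nat_le_iff[THEN iffD2, OF count] by simp
  ultimately show ?thesis
    using deg_U unfolding W_def by linarith
qed

section \<open>Random edges\<close>

lemma finite_all_pairs: "finite (all_pairs n)"
proof -
  have "all_pairs n \<subseteq> Pow {..<n}"
    by (auto simp: all_pairs_def)
  then show ?thesis
    by (rule finite_subset) simp
qed

lemma closing_pairs_subset_all_pairs: "W \<subseteq> {..<n} \<Longrightarrow> closing_pairs G l W \<subseteq> all_pairs n"
  using closing_vertices_subset unfolding closing_pairs_def all_pairs_def by fastforce

lemma prob_gnp_avoids:
  assumes "F \<subseteq> all_pairs n" "0 \<le> p" "p \<le> 1"
  shows "measure_pmf.prob (gnp n p) {R. R \<inter> F = {}} = (1 - p) ^ card F"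
proof -
  define A where "A = all_pairs n"
  define B where "B = (\<lambda>e. if e \<in> F then {False} else (UNIV :: bool set))"
  have "(\<lambda>f. {e \<in> A. f e}) -` {R. R \<inter> F = {}} = Pi A B"
    using assms(1) unfolding A_def B_def Pi_def by auto
  then have "measure_pmf.prob (gnp n p) {R. R \<inter> F = {}} =
      measure_pmf.prob (Pi_pmf A False (\<lambda>_. bernoulli_pmf p)) (Pi A B)"
    unfolding gnp_def A_def[symmetric] by (simp add: measure_map_pmf)
  also have "\<dots> = (\<Prod>x\<in>A. measure_pmf.prob (bernoulli_pmf p) (B x))"
    by (rule measure_Pi_pmf_Pi) (simp add: A_def finite_all_pairs)
  also have "\<dots> = (\<Prod>x\<in>A. if x \<in> F then 1 - p else 1)"
    using assms(2,3) by (intro prod.cong refl) (simp add: B_def measure_pmf_single)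
  also have "\<dots> = (1 - p) ^ card (A \<inter> F)"
    by (simp add: prod.If_cases finite_all_pairs A_def Int_def)
  also have "A \<inter> F = F"
    using assms(1) A_def by blast
  finally show ?thesis .
qed

lemma one_minus_power_le_exp:
  fixes p :: real
  assumes "0 \<le> p" "p \<le> 1"
  shows "(1 - p) ^ k \<le> exp (- p * real k)"
proof -
  have "(1 - p) ^ k \<le> exp (- p) ^ k"
    using assms exp_ge_add_one_self[of "- p"] by (intro power_mono) auto
  then show ?thesis
    by (simp add: exp_of_nat_mult[symmetric] mult.commute)
qed

lemma card_subsets_card_le:
  assumes "finite A" "A \<noteq> {}"
  shows "card {U. U \<subseteq> A \<and> card U \<le> K} \<le> (K + 1) * card A ^ K"
proof -
  have "{U. U \<subseteq> A \<and> card U \<le> K} = (\<Union>k\<le>K. {U. U \<subseteq> A \<and> card U = k})"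
    by auto
  then have "card {U. U \<subseteq> A \<and> card U \<le> K} \<le> (\<Sum>k\<le>K. card {U. U \<subseteq> A \<and> card U = k})"
    by (simp add: card_UN_le)
  also have "\<dots> = (\<Sum>k\<le>K. card A choose k)"
    using assms(1) by (simp add: n_subsets)
  also have "\<dots> \<le> (\<Sum>k\<le>K. card A ^ K)"
  proof (intro sum_mono)
    fix k assume "k \<in> {..K}"
    have "card A choose k \<le> card A ^ k"
      by (cases "k \<le> card A") (auto simp: binomial_le_pow binomial_eq_0)
    also have "\<dots> \<le> card A ^ K"
      using \<open>k \<in> {..K}\<close> assms by (intro power_increasing) (auto simp: card_gt_0_iff Suc_le_eq)
    finally show "card A choose k \<le> card A ^ K" .
  qed
  finally show ?thesis by simp
qed

lemma prob_not_has_disjoint_cycles_le: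
  assumes "finite V"
  shows "measure_pmf.prob Q {R. \<not> has_disjoint_cycles (G \<union> R) l m} \<le>
    (\<Sum>U\<in>{U. U \<subseteq> V \<and> card U \<le> l * m}. measure_pmf.prob Q {R. R \<inter> closing_pairs G l (V - U) = {}})"
proof -
  let ?UU = "{U. U \<subseteq> V \<and> card U \<le> l * m}"
  have "{R. \<not> has_disjoint_cycles (G \<union> R) l m} \<subseteq> (\<Union>U\<in>?UU. {R. R \<inter> closing_pairs G l (V - U) = {}})"
  proof
    fix R assume "R \<in> {R. \<not> has_disjoint_cycles (G \<union> R) l m}"
    then obtain U where "U \<subseteq> V" "card U \<le> l * m" "R \<inter> closing_pairs G l (V - U) = {}"
      using has_disjoint_cycles_if_closing_pairs_hit[of V l m R G] by auto
    then show "R \<in> (\<Union>U\<in>?UU. {R. R \<inter> closing_pairs G l (V - U) = {}})"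
      by blast
  qed
  then have "measure_pmf.prob Q {R. \<not> has_disjoint_cycles (G \<union> R) l m} \<le>
      measure_pmf.prob Q (\<Union>U\<in>?UU. {R. R \<inter> closing_pairs G l (V - U) = {}})"
    by (rule measure_pmf.finite_measure_mono) simp
  also have "\<dots> \<le> (\<Sum>U\<in>?UU. measure_pmf.prob Q {R. R \<inter> closing_pairs G l (V - U) = {}})"
    using assms by (intro measure_pmf.finite_measure_subadditive_finite) auto
  finally show ?thesis .
qed

lemma mult_add_one_le_power:
  fixes n m l :: nat
  assumes "n \<ge> 2" "m \<ge> 1"
  shows "(l * m + 1) * n \<le> (l + 1) * n ^ (2 * m)"
proof -
  have "m < 2 ^ m" by (rule less_exp)
  also have "(2::nat) ^ m \<le> n ^ m" using assms(1) by (rule power_mono) simp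
  finally have "m \<le> n ^ m" by simp
  moreover have "n \<le> n ^ m"
    using assms by (simp add: self_le_power)
  ultimately have "m * n \<le> n ^ m * n ^ m"
    by (rule mult_le_mono)
  have "(l * m + 1) * n \<le> ((l + 1) * m) * n"
    using assms(2) by (intro mult_le_mono1) simp
  also have "\<dots> \<le> (l + 1) * (n ^ m * n ^ m)"
    using \<open>m * n \<le> n ^ m * n ^ m\<close> by (simp only: mult.assoc mult_le_mono2)
  also have "\<dots> = (l + 1) * n ^ (2 * m)"
    by (simp add: power_add[symmetric] mult_2)
  finally show ?thesis .
qed

lemma prob_gnp_avoids_le_inverse_power:
  assumes "F \<subseteq> all_pairs n" "n > 0" "0 \<le> p" "p \<le> 1"
    and "real k * ln (real n) \<le> p * real (card F)"
  shows "measure_pmf.prob (gnp n p) {R. R \<inter> F = {}} \<le> inverse (real n ^ k)"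
proof -
  have "measure_pmf.prob (gnp n p) {R. R \<inter> F = {}} = (1 - p) ^ card F"
    using assms(1,3,4) by (rule prob_gnp_avoids)
  also have "\<dots> \<le> exp (- p * real (card F))"
    using assms(3,4) by (rule one_minus_power_le_exp)
  also have "\<dots> \<le> exp (- (real k * ln (real n)))"
    using assms(5) by simp
  also have "\<dots> = inverse (real n ^ k)"
    using assms(2) by (simp only: exp_minus exp_of_nat_mult exp_ln of_nat_0_less_iff)
  finally show ?thesis .
qed

lemma card_subsets_mult_inverse_power_le:
  assumes "n \<ge> 2" "m \<ge> 1"
  shows "real (card {U. U \<subseteq> {..<n} \<and> card U \<le> l * m}) * inverse (real n ^ ((l + 2) * m))
           \<le> real (l + 1) / real n"
proof -
  have "real n > 0" using assms(1) by simp
  have "card {U. U \<subseteq> {..<n} \<and> card U \<le> l * m} \<le> (l * m + 1) * n ^ (l * m)"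
    using card_subsets_card_le[OF finite_lessThan, of n "l * m"] assms(1)
    by (simp add: lessThan_empty_iff)
  then have "real (card {U. U \<subseteq> {..<n} \<and> card U \<le> l * m}) \<le> real ((l * m + 1) * n ^ (l * m))"
    by (simp only: of_nat_le_iff)
  then have "real (card {U. U \<subseteq> {..<n} \<and> card U \<le> l * m}) * inverse (real n ^ ((l + 2) * m))
      \<le> real ((l * m + 1) * n ^ (l * m)) * inverse (real n ^ ((l + 2) * m))"
    by (rule mult_right_mono) simp
  also have "\<dots> = real (l * m + 1) / real n ^ (2 * m)"
  proof -
    have "real n ^ ((l + 2) * m) = real n ^ (l * m) * real n ^ (2 * m)"
      by (simp only: add_mult_distrib power_add)
    then show ?thesis
      using \<open>real n > 0\<close> by (simp add: field_simps)
  qed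
  also have "\<dots> \<le> real (l + 1) / real n"
  proof -
    have "real (l * m + 1) * real n \<le> real (l + 1) * real n ^ (2 * m)"
      using of_nat_le_iff[where 'a=real, THEN iffD2, OF mult_add_one_le_power[OF assms, of l]]
      by (simp add: algebra_simps)
    then show ?thesis
      using \<open>real n > 0\<close> by (simp add: field_simps)
  qed
  finally show ?thesis .
qed

lemma prob_has_disjoint_cycles_ge:
  assumes "l \<ge> 3" "n \<ge> 2" "64 * l \<le> 9 * m"
    and graph: "is_graph_on n G"
    and max_deg: "\<forall>u<n. real (degree G u) < real n / (32 * real (l div 2))"
    and min_deg: "\<forall>u<n. degree G u \<ge> m"
    and m_le: "real m \<le> real n / (16 * real ((l + 1) div 2))"
    and p_ge: "real (8 * (l + 2)) * ln (real n) / real n \<le> p" and "p \<le> 1"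
  shows "1 - real (l + 1) / real n \<le> measure_pmf.prob (gnp n p) {R. has_disjoint_cycles (G \<union> R) l m}"
proof -
  let ?UU = "{U. U \<subseteq> {..<n} \<and> card U \<le> l * m}"
  let ?avoid = "\<lambda>U. {R. R \<inter> closing_pairs G l ({..<n} - U) = {}}"
  have "m \<ge> 1" "real n > 0" "ln (real n) \<ge> 0"
    using assms(1-3) by simp_all
  then have p_ge': "real (8 * (l + 2)) * ln (real n) \<le> p * real n" and "p \<ge> 0"
    using p_ge zero_le_divide_iff[of "real (8 * (l + 2)) * ln (real n)" "real n"]
    by (simp_all only: pos_divide_le_eq) (simp add: order.trans[OF _ p_ge])
  have avoid_le: "measure_pmf.prob (gnp n p) (?avoid U) \<le> inverse (real n ^ ((l + 2) * m))"
    if "U \<in> ?UU" for U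
  proof (intro prob_gnp_avoids_le_inverse_power closing_pairs_subset_all_pairs)
    let ?k = "card (closing_pairs G l ({..<n} - U))"
    have "real (8 * (l + 2)) * ln (real n) * real m \<le> p * real n * real m"
      using p_ge' by (intro mult_right_mono) auto
    also have "\<dots> \<le> p * (8 * real ?k)"
      using that \<open>p \<ge> 0\<close> card_closing_pairs_ge[OF graph assms(1) max_deg min_deg m_le assms(3)]
      by (simp add: mult.assoc mult_left_mono)
    finally show "real ((l + 2) * m) * ln (real n) \<le> p * real ?k"
      by (simp add: algebra_simps)
  qed (use \<open>real n > 0\<close> \<open>p \<ge> 0\<close> \<open>p \<le> 1\<close> in auto)
  have "measure_pmf.prob (gnp n p) {R. \<not> has_disjoint_cycles (G \<union> R) l m} \<le>
      (\<Sum>U\<in>?UU. measure_pmf.prob (gnp n p) (?avoid U))"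
    by (rule prob_not_has_disjoint_cycles_le) simp
  also have "\<dots> \<le> real (card ?UU) * inverse (real n ^ ((l + 2) * m))"
    using sum_mono[of ?UU, OF avoid_le] by simp
  also have "\<dots> \<le> real (l + 1) / real n"
    using \<open>n \<ge> 2\<close> \<open>m \<ge> 1\<close> by (rule card_subsets_mult_inverse_power_le)
  finally have "measure_pmf.prob (gnp n p) {R. \<not> has_disjoint_cycles (G \<union> R) l m}
      \<le> real (l + 1) / real n" .
  moreover have "measure_pmf.prob (gnp n p) {R. \<not> has_disjoint_cycles (G \<union> R) l m} =
      1 - measure_pmf.prob (gnp n p) {R. has_disjoint_cycles (G \<union> R) l m}"
    using measure_pmf.prob_compl[of "{R. has_disjoint_cycles (G \<union> R) l m}" "gnp n p"]
    by (simp add: Compl_eq_Diff_UNIV[symmetric] Collect_neg_eq)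
  ultimately show ?thesis by linarith
qed

lemma prob_has_disjoint_cycles_tendsto_1:
  assumes "l \<ge> 3"
    and "\<forall>\<^sub>F n in sequentially.
          sqrt (real n) \<le> real (m n) \<and>
          real (m n) \<le> real n / (16 * real ((l + 1) div 2)) \<and>
          is_graph_on n (G n) \<and>
          (\<forall>u<n. real (degree (G n) u) < real n / (32 * real (l div 2))) \<and>
          (\<forall>u<n. degree (G n) u \<ge> m n) \<and>
          real (8 * (l + 2)) * ln (real n) / real n \<le> p n \<and> p n \<le> 1"
  shows "(\<lambda>n. measure_pmf.prob (gnp n (p n)) {R. has_disjoint_cycles (G n \<union> R) l (m n)})
           \<longlonglongrightarrow> 1"
proof (rule tendsto_sandwich[where h = "\<lambda>_. 1"])
  show "\<forall>\<^sub>F n in sequentially.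
      1 - real (l + 1) / real n \<le> measure_pmf.prob (gnp n (p n)) {R. has_disjoint_cycles (G n \<union> R) l (m n)}"
    using assms(2) eventually_ge_at_top[of "max 2 ((64 * l)\<^sup>2)"]
  proof eventually_elim
    case (elim n)
    have "real (64 * l) \<le> sqrt (real n)"
      using elim by (intro real_le_rsqrt) (simp flip: of_nat_power)
    then have "64 * l \<le> 9 * m n"
      using elim by linarith
    then show ?case
      using elim by (intro prob_has_disjoint_cycles_ge[OF assms(1)]) auto
  qed
  show "(\<lambda>n. 1 - real (l + 1) / real n) \<longlonglongrightarrow> 1"
    using tendsto_diff[OF tendsto_const lim_const_over_n[of "real (l + 1)"]] by simp
qed simp_all

theorem proposition3p2:
  fixes l :: nat
  assumes "l \<ge> 3"
  shows "\<exists>M::real. M \<ge> 1 \<and> (\<exists>C::real. C > 0 \<and>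
    (\<forall>(m :: nat \<Rightarrow> nat) (G :: nat \<Rightarrow> nat set set) (p :: nat \<Rightarrow> real).
      (\<forall>\<^sub>F n in sequentially.
          M * sqrt (real n) \<le> real (m n) \<and>
          real (m n) \<le> real n / (16 * real ((l + 1) div 2)) \<and>
          is_graph_on n (G n) \<and>
          (\<forall>u<n. real (degree (G n) u) < real n / (32 * real (l div 2))) \<and>
          (\<forall>u<n. degree (G n) u \<ge> m n) \<and>
          C * ln (real n) / real n \<le> p n \<and> p n \<le> 1)
      \<longrightarrow> (\<lambda>n. measure_pmf.prob (gnp n (p n))
                 {R. has_disjoint_cycles (G n \<union> R) l (m n)}) \<longlonglongrightarrow> 1))"
  by (rule exI[of _ 1], rule conjI[OF order_refl], rule exI[of _ "real (8 * (l + 2))"])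
    (simp add: prob_has_disjoint_cycles_tendsto_1[OF assms])

end
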